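(* Let $n\ge 1$ and let $\tau\ge 0$ be real. Set $\tau'=\dfrac{\tau}{(n-1)\tau+n}$. Then $$\Omega_n(\tau')\subset\tilde\Omega(\tau')\subset\Omega^n(\tau)\subset\Omega_n(n\tau),$$ where these subsets of $\mathbb{R}^n$ are defined as follows. For $\sigma\ge 0$: $\Omega_n(\sigma)$ is the set of $\omega\in\mathbb{R}^n$ for which there is $C>0$ with $\|T\omega\|_{\mathbb{Z}}\ge C\,T^{-(1+\sigma)/n}$ for every integer $T\ge 1$; $\Omega^n(\sigma)$ is the set of $\omega\in\mathbb{R}^n$ for which there is $C>0$ with $\|\langle k,\omega\rangle\|_{\mathbb{Z}}\ge C\,|k|^{-(1+\sigma)n}$ for every $k\in\mathbb{Z}^n\setminus\{0\}$; $\Omega(\sigma)$ is the set of $\omega\in\mathbb{R}^n$ for which there is $C>0$ with $T_{i+1}(\omega)\le C\,T_i(\omega)^{1+\sigma}$ for every index $i\ge 0$ for which $T_{i+1}(\omega)$ is defined; $\tilde\Omega(\sigma)$ is the set of $\omega\in\Omega(\sigma)$ such that $\langle k,\omega\rangle\notin\mathbb{Z}$ for every $k\in\mathbb{Z}^n\setminus\{0\}$.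
   Context: For $\omega=(\omega_1,\dots,\omega_n)\in\mathbb{R}^n$, $|\omega|=\max_i|\omega_i|$, $\langle\cdot,\cdot\rangle$ is the standard scalar product, $\|\omega\|_{\mathbb{Z}}=\min_{k\in\mathbb{Z}^n}|\omega-k|$, and for $x\in\mathbb{R}$, $\|x\|_{\mathbb{Z}}=\min_{k\in\mathbb{Z}}|x-k|$. The periods $T_i(\omega)$ of $\omega$ are defined by $T_0(\omega)=1$ and $T_{i+1}(\omega)=\min\{T\in\mathbb{N},\,T\ge1 : \|T\omega\|_{\mathbb{Z}}<\|T_i(\omega)\omega\|_{\mathbb{Z}}\}$ (the sequence stops if this set is empty, which happens only when $\omega$ is rational). *)

theory Defs
  imports "HOL-Analysis.Analysis"
begin

definition supnorm :: "real ^ 'n \<Rightarrow> real" where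
  "supnorm w = Max (range (\<lambda>i. \<bar>w $ i\<bar>))"

definition int_vecs :: "(real ^ 'n) set" where
  "int_vecs = {k. \<forall>i. k $ i \<in> \<int>}"

definition znorm :: "real ^ 'n \<Rightarrow> real" where
  "znorm w = Inf ((\<lambda>k. supnorm (w - k)) ` int_vecs)"

definition znorm1 :: "real \<Rightarrow> real" where
  "znorm1 x = Inf ((\<lambda>k::int. \<bar>x - of_int k\<bar>) ` UNIV)"

text \<open>Periods T_i(w); None means the sequence has stopped (T_i undefined).\<close>
primrec periods :: "real ^ 'n \<Rightarrow> nat \<Rightarrow> nat option" where
  "periods w 0 = Some 1"
| "periods w (Suc i) =
     (case periods w i of
        None \<Rightarrow> None
      | Some t \<Rightarrow>
          (if \<exists>T::nat. T \<ge> 1 \<and> znorm (real T *\<^sub>R w) < znorm (real t *\<^sub>R w)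
           then Some (LEAST T::nat. T \<ge> 1 \<and> znorm (real T *\<^sub>R w) < znorm (real t *\<^sub>R w))
           else None))"

definition Omega_low :: "real \<Rightarrow> (real ^ 'n) set" where
  "Omega_low \<sigma> = {w. \<exists>C>0. \<forall>T::nat. T \<ge> 1 \<longrightarrow>
      znorm (real T *\<^sub>R w) \<ge> C * real T powr (-(1 + \<sigma>) / real CARD('n))}"

definition Omega_up :: "real \<Rightarrow> (real ^ 'n) set" where
  "Omega_up \<sigma> = {w. \<exists>C>0. \<forall>k \<in> int_vecs. k \<noteq> 0 \<longrightarrow>
      znorm1 (k \<bullet> w) \<ge> C * supnorm k powr (-(1 + \<sigma>) * real CARD('n))}"

definition Omega_per :: "real \<Rightarrow> (real ^ 'n) set" where
  "Omega_per \<sigma> = {w. \<exists>C>0. \<forall>i t t'. periods w i = Some t \<longrightarrow> periods w (Suc i) = Some t' \<longrightarrow>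
      real t' \<le> C * real t powr (1 + \<sigma>)}"

definition Omega_tilde :: "real \<Rightarrow> (real ^ 'n) set" where
  "Omega_tilde \<sigma> = {w \<in> Omega_per \<sigma>. \<forall>k \<in> int_vecs. k \<noteq> 0 \<longrightarrow> k \<bullet> w \<notin> \<int>}"

end

theory Submission
  imports Defs
begin

text \<open>Everything rests on the pigeonhole principle. Dirichlet's theorem gives, for every M, some
  T \<le> M^n with \<parallel>T\<omega>\<parallel> < 1/M; choosing 1/M of the size of \<parallel>T_i \<omega>\<parallel> bounds T_(i+1)
  polynomially in T_i on \<Omega>_n. Dually, pigeonholing \<langle>v, round(T\<omega>)\<rangle> mod T over the integer
  vectors v with entries in [0, T^(1/n)] yields k with T \<parallel>\<langle>k,\<omega>\<rangle>\<parallel> \<le> n |k| \<parallel>T\<omega>\<parallel>,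
  which gives \<Omega>^n(\<tau>) \<subseteq> \<Omega>_n(n\<tau>).

  The other two inclusions use Dirichlet's argument constrained by a near relation
  \<delta> = |\<langle>k,\<omega>\<rangle> - m|: pigeonholing the fractional parts of all coordinates of T\<omega> except the one
  where k is largest, together with the integer T m - \<Sum> k_i \<lfloor>T \<omega>_i\<rfloor>, produces T \<le> N with
  \<parallel>T\<omega>\<parallel> \<le> N\<delta>/|k| + n/M. For \<delta> = 0 this contradicts the lower bound defining \<Omega>_n(\<tau>')
  because (n-1)(1+\<tau>') < n. For \<delta> > 0, the period T_i bracketing 1/(2\<delta>) is then a good
  approximation as well, and T_(i+1) \<le> C T_i^(1+\<tau>') forces \<delta> \<ge> c |k|^(-(1+\<tau>)n).\<close>

section \<open>Sup norm and distance to the integer lattice\<close>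

lemma abs_le_supnorm: "\<bar>w $ i\<bar> \<le> supnorm w"
  unfolding supnorm_def by (rule Max_ge) auto

lemma supnorm_attained: "\<exists>i. supnorm w = \<bar>w $ i\<bar>"
proof -
  have "Max (range (\<lambda>i. \<bar>w $ i\<bar>)) \<in> range (\<lambda>i. \<bar>w $ i\<bar>)"
    by (rule Max_in) auto
  then show ?thesis unfolding supnorm_def by (metis rangeE)
qed

lemma supnorm_leI: "(\<And>i. \<bar>w $ i\<bar> \<le> B) \<Longrightarrow> supnorm w \<le> B"
  using supnorm_attained[of w] by metis

lemma supnorm_nonneg: "0 \<le> supnorm w"
  using abs_le_supnorm[of w] abs_ge_zero order_trans by blast

lemma abs_inner_le_supnorm:
  fixes k e :: "real ^ 'n"
  shows "\<bar>k \<bullet> e\<bar> \<le> real CARD('n) * supnorm k * supnorm e"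
proof -
  have "\<bar>k \<bullet> e\<bar> = \<bar>\<Sum>i\<in>UNIV. k $ i * e $ i\<bar>" by (simp add: inner_vec_def)
  also have "\<dots> \<le> (\<Sum>i\<in>UNIV. \<bar>k $ i\<bar> * \<bar>e $ i\<bar>)"
    using sum_abs[of "\<lambda>i. k $ i * e $ i" UNIV] by (simp add: abs_mult)
  also have "\<dots> \<le> (\<Sum>i\<in>(UNIV::'n set). supnorm k * supnorm e)"
    by (intro sum_mono mult_mono) (auto simp: abs_le_supnorm supnorm_nonneg)
  finally show ?thesis by simp
qed

lemma inner_int_vecs_Ints: "k \<in> int_vecs \<Longrightarrow> p \<in> int_vecs \<Longrightarrow> k \<bullet> p \<in> \<int>"
  unfolding int_vecs_def inner_vec_def by (auto intro: Ints_sum Ints_mult)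

lemma int_vec_supnorm_ge_1: "k \<in> int_vecs \<Longrightarrow> k \<noteq> 0 \<Longrightarrow> 1 \<le> supnorm k"
proof -
  assume k: "k \<in> int_vecs" "k \<noteq> 0"
  then obtain i where "k $ i \<noteq> 0" by (metis vec_eq_iff zero_index)
  moreover have "k $ i \<in> \<int>" using k unfolding int_vecs_def by auto
  ultimately have "1 \<le> \<bar>k $ i\<bar>" using Ints_nonzero_abs_ge1 by blast
  then show ?thesis using abs_le_supnorm[of k i] by linarith
qed

lemma int_vec_supnorm_nat: "k \<in> int_vecs \<Longrightarrow> \<exists>K::nat. supnorm k = real K"
proof -
  assume "k \<in> int_vecs"
  obtain i where i: "supnorm k = \<bar>k $ i\<bar>" using supnorm_attained by blast
  from \<open>k \<in> int_vecs\<close> obtain z where "k $ i = of_int z" unfolding int_vecs_def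
    by (auto elim: Ints_cases)
  then have "supnorm k = real (nat \<bar>z\<bar>)" using i by simp
  then show ?thesis ..
qed

definition round_vec :: "real ^ 'n \<Rightarrow> real ^ 'n" where
  "round_vec w = (\<chi> i. of_int (round (w $ i)))"

lemma round_vec_int_vecs: "round_vec w \<in> int_vecs"
  unfolding round_vec_def int_vecs_def by auto

lemma znorm_eq_supnorm: "znorm w = supnorm (w - round_vec w)"
  unfolding znorm_def
proof (rule cInf_eq_minimum)
  show "supnorm (w - round_vec w) \<in> (\<lambda>k. supnorm (w - k)) ` int_vecs"
    using round_vec_int_vecs by auto
  fix x assume "x \<in> (\<lambda>k. supnorm (w - k)) ` int_vecs"
  then obtain k where k: "k \<in> int_vecs" "x = supnorm (w - k)" by auto
  show "supnorm (w - round_vec w) \<le> x"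
  proof (rule supnorm_leI)
    fix i
    from k(1) obtain z where z: "k $ i = of_int z" unfolding int_vecs_def by (auto elim: Ints_cases)
    have "\<bar>(w - round_vec w) $ i\<bar> \<le> \<bar>w $ i - of_int z\<bar>"
      unfolding round_vec_def by (simp add: round_diff_minimal)
    also have "\<dots> \<le> x" using k(2) z abs_le_supnorm[of "w - k" i] by simp
    finally show "\<bar>(w - round_vec w) $ i\<bar> \<le> x" .
  qed
qed

lemma znorm_nonneg: "0 \<le> znorm w"
  by (simp add: znorm_eq_supnorm supnorm_nonneg)

lemma znorm_le_half: "znorm w \<le> 1/2"
  unfolding znorm_eq_supnorm
  by (rule supnorm_leI) (use of_int_round_abs_le in \<open>simp add: round_vec_def abs_minus_commute\<close>)

lemma znorm_leI: "(\<And>i. \<exists>z. \<bar>w $ i - of_int z\<bar> \<le> B) \<Longrightarrow> znorm w \<le> B"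
  unfolding znorm_eq_supnorm
proof (rule supnorm_leI)
  fix i assume "\<And>i. \<exists>z. \<bar>w $ i - of_int z\<bar> \<le> B"
  then obtain z where "\<bar>w $ i - of_int z\<bar> \<le> B" by blast
  then show "\<bar>(w - round_vec w) $ i\<bar> \<le> B"
    using round_diff_minimal[of "w $ i" z] by (simp add: round_vec_def)
qed

lemma znorm_lessI: "(\<And>i. \<exists>z. \<bar>w $ i - of_int z\<bar> < B) \<Longrightarrow> znorm w < B"
proof -
  assume small: "\<And>i. \<exists>z. \<bar>w $ i - of_int z\<bar> < B"
  obtain i where i: "znorm w = \<bar>(w - round_vec w) $ i\<bar>"
    using supnorm_attained znorm_eq_supnorm by metis
  from small obtain z where "\<bar>w $ i - of_int z\<bar> < B" by blast
  then show ?thesis using i round_diff_minimal[of "w $ i" z] by (simp add: round_vec_def)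
qed

lemma znorm1_eq: "znorm1 x = \<bar>x - of_int (round x)\<bar>"
  unfolding znorm1_def by (rule cInf_eq_minimum) (auto intro: round_diff_minimal)

lemma znorm1_le: "znorm1 x \<le> \<bar>x - of_int m\<bar>"
  by (simp add: znorm1_eq round_diff_minimal)

lemma near_integer_inner_le_znorm:
  fixes w k :: "real ^ 'n"
  assumes k: "k \<in> int_vecs" and small: "real T * \<bar>k \<bullet> w - of_int m\<bar> \<le> 1/2"
  shows "real T * \<bar>k \<bullet> w - of_int m\<bar> \<le> real CARD('n) * supnorm k * znorm (real T *\<^sub>R w)"
proof -
  define p where "p = round_vec (real T *\<^sub>R w)"
  define B where "B = real CARD('n) * supnorm k * znorm (real T *\<^sub>R w)"
  have kp: "\<bar>k \<bullet> (real T *\<^sub>R w - p)\<bar> \<le> B"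
    using abs_inner_le_supnorm[of k "real T *\<^sub>R w - p"] unfolding B_def p_def znorm_eq_supnorm .
  have "real T * (k \<bullet> w - of_int m) - k \<bullet> (real T *\<^sub>R w - p) = k \<bullet> p - real T * of_int m"
    by (simp add: inner_diff_right algebra_simps)
  also have "\<dots> \<in> \<int>"
    using inner_int_vecs_Ints[OF k round_vec_int_vecs] unfolding p_def by (intro Ints_diff Ints_mult) auto
  finally have int: "real T * (k \<bullet> w - of_int m) - k \<bullet> (real T *\<^sub>R w - p) \<in> \<int>" .
  show ?thesis
  proof (cases "B < 1/2")
    case True
    have "\<bar>real T * (k \<bullet> w - of_int m)\<bar> \<le> 1/2" using small by (simp add: abs_mult)
    then have "\<bar>real T * (k \<bullet> w - of_int m) - k \<bullet> (real T *\<^sub>R w - p)\<bar> < 1"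
      using kp True abs_triangle_ineq4[of "real T * (k \<bullet> w - of_int m)"] by linarith
    then have "real T * (k \<bullet> w - of_int m) = k \<bullet> (real T *\<^sub>R w - p)"
      using int Ints_nonzero_abs_less1 by force
    then show ?thesis using kp unfolding B_def by (simp add: abs_mult)
  qed (use small B_def in simp)
qed

section \<open>Dirichlet's theorem and its dual\<close>

lemma floor_scaled_frac_eq_imp_close:
  assumes "M > 0" and "\<lfloor>real M * frac a\<rfloor> = \<lfloor>real M * frac b\<rfloor>"
  shows "\<bar>frac b - frac a\<bar> < 1 / real M"
proof -
  have "\<bar>real M * frac a - real M * frac b\<bar> < 1"
    using assms(2) by (rule floor_eq_imp_diff_1)
  then have "real M * \<bar>frac b - frac a\<bar> < 1"
    by (simp add: abs_minus_commute right_diff_distrib[symmetric] abs_mult)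
  then show ?thesis using assms(1) by (simp add: field_simps)
qed

lemma pigeonhole_frac_boxes:
  fixes \<alpha> :: "'a \<Rightarrow> real" and g :: "nat \<Rightarrow> 'b"
  assumes J: "finite J" and M: "M \<ge> 1" and S: "finite S" and g: "\<forall>T\<le>N. g T \<in> S"
    and card: "card S * M ^ card J \<le> N"
  shows "\<exists>T1 T2. T1 < T2 \<and> T2 \<le> N \<and> g T1 = g T2 \<and>
     (\<forall>j\<in>J. \<bar>frac (real T2 * \<alpha> j) - frac (real T1 * \<alpha> j)\<bar> < 1 / real M)"
proof -
  define box where "box T = restrict (\<lambda>j. \<lfloor>real M * frac (real T * \<alpha> j)\<rfloor>) J" for T
  define B where "B = (J \<rightarrow>\<^sub>E {0..<int M}) \<times> S"
  have "\<lfloor>real M * frac x\<rfloor> \<in> {0..<int M}" for x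
    using M frac_lt_1[of x] by (simp add: frac_ge_0 floor_less_iff)
  then have sub: "(\<lambda>T. (box T, g T)) ` {0..N} \<subseteq> B"
    using g unfolding box_def B_def by (auto simp: restrict_PiE_iff)
  have "card B = M ^ card J * card S"
    using J S unfolding B_def by (simp add: card_cartesian_product card_funcsetE)
  then have "card B < card {0..N}" using card by (simp add: mult.commute)
  moreover have "finite B" using J S unfolding B_def by (simp add: finite_PiE)
  ultimately have "\<not> inj_on (\<lambda>T. (box T, g T)) {0..N}"
    using card_inj_on_le[OF _ sub] by fastforce
  then obtain T1 T2 where "T1 \<le> N" "T2 \<le> N" "T1 \<noteq> T2" "box T1 = box T2" "g T1 = g T2"
    unfolding inj_on_def by auto
  then obtain T1 T2 where T: "T1 < T2" "T2 \<le> N" "box T1 = box T2" "g T1 = g T2"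
    by (metis linorder_neqE_nat)
  have "\<bar>frac (real T2 * \<alpha> j) - frac (real T1 * \<alpha> j)\<bar> < 1 / real M" if "j \<in> J" for j
    using floor_scaled_frac_eq_imp_close M fun_cong[OF T(3), of j] that unfolding box_def by simp
  then show ?thesis using T by blast
qed

lemma floor_diff_plus_frac_diff:
  assumes "T1 \<le> T2"
  shows "real (T2 - T1) * x = of_int (\<lfloor>real T2 * x\<rfloor> - \<lfloor>real T1 * x\<rfloor>)
           + (frac (real T2 * x) - frac (real T1 * x))"
  using assms by (simp add: frac_def of_nat_diff algebra_simps)

lemma dirichlet_approximation:
  fixes w :: "real ^ 'n"
  assumes M: "M \<ge> 1"
  shows "\<exists>T::nat. 1 \<le> T \<and> T \<le> M ^ CARD('n) \<and> znorm (real T *\<^sub>R w) < 1 / real M"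
proof -
  obtain T1 T2 where T: "T1 < T2" "T2 \<le> M ^ CARD('n)"
    "\<forall>j. \<bar>frac (real T2 * w $ j) - frac (real T1 * w $ j)\<bar> < 1 / real M"
    using pigeonhole_frac_boxes[of "UNIV::'n set" M "{()}" "M ^ CARD('n)" "\<lambda>_. ()" "\<lambda>j. w $ j"] M
    by auto
  have "znorm (real (T2 - T1) *\<^sub>R w) < 1 / real M"
  proof (rule znorm_lessI)
    fix i
    show "\<exists>z. \<bar>(real (T2 - T1) *\<^sub>R w) $ i - of_int z\<bar> < 1 / real M"
      using T(3) floor_diff_plus_frac_diff[of T1 T2 "w $ i"] T(1)
      by (intro exI[of _ "\<lfloor>real T2 * w $ i\<rfloor> - \<lfloor>real T1 * w $ i\<rfloor>"]) auto
  qed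
  then show ?thesis using T by (intro exI[of _ "T2 - T1"]) auto
qed

lemma exists_nat_inverse_bounds:
  fixes x :: real
  assumes "0 < x" "x \<le> 1/2"
  shows "\<exists>M::nat. 1 \<le> M \<and> real M \<le> 1 / x \<and> 1 / real M \<le> 2 * x"
proof -
  define M where "M = nat \<lfloor>1 / x\<rfloor>"
  have "2 \<le> 1 / x" using assms by (simp add: field_simps)
  then have "2 \<le> \<lfloor>1 / x\<rfloor>" by (simp add: le_floor_iff)
  then have "real M = of_int \<lfloor>1 / x\<rfloor>" "2 \<le> real M" unfolding M_def by linarith+
  then have M: "real M \<le> 1 / x" "1 / x < real M + 1" "2 \<le> real M"
    by linarith+
  then have "1 / x \<le> 2 * real M" by linarith
  then have "1 / real M \<le> 2 * x" using assms M(3) by (simp add: field_simps)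
  then show ?thesis using M by (intro exI[of _ M]) auto
qed

lemma znorm_arbitrarily_small:
  fixes w :: "real ^ 'n"
  assumes "\<epsilon> > 0"
  shows "\<exists>T::nat. 1 \<le> T \<and> znorm (real T *\<^sub>R w) < \<epsilon>"
proof -
  obtain M :: nat where M: "1 \<le> M" "1 / real M \<le> 2 * (min \<epsilon> 1 / 2)"
    using exists_nat_inverse_bounds[of "min \<epsilon> 1 / 2"] assms by auto
  then show ?thesis using dirichlet_approximation[OF M(1), of w] by force
qed

lemma exists_small_int_combination_dvd:
  fixes p :: "'n::finite \<Rightarrow> int" and T K :: nat
  assumes T: "1 \<le> T" and TK: "T < (K + 1) ^ CARD('n)"
  shows "\<exists>v::'n \<Rightarrow> int. (\<exists>i. v i \<noteq> 0) \<and> (\<forall>i. \<bar>v i\<bar> \<le> int K) \<and> int T dvd (\<Sum>i\<in>UNIV. v i * p i)"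
proof -
  define V where "V = (UNIV :: 'n set) \<rightarrow>\<^sub>E {0..int K}"
  define f where "f v = (\<Sum>i\<in>UNIV. v i * p i) mod int T" for v :: "'n \<Rightarrow> int"
  have fV: "f ` V \<subseteq> {0..<int T}" unfolding f_def using T by auto
  have "card V = card {0..int K} ^ CARD('n)" unfolding V_def by (rule card_funcsetE) simp
  also have "card {0..int K} = K + 1" by simp
  finally have "card {0..<int T} < card V" using TK by simp
  then have "\<not> inj_on f V"
    using card_inj_on_le[OF _ fV] by fastforce
  then obtain v1 v2 where v: "v1 \<in> V" "v2 \<in> V" "v1 \<noteq> v2" "f v1 = f v2"
    unfolding inj_on_def by blast
  have "int T dvd (\<Sum>i\<in>UNIV. v1 i * p i) - (\<Sum>i\<in>UNIV. v2 i * p i)"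
    using v(4) unfolding f_def by (simp add: mod_eq_dvd_iff)
  then have "int T dvd (\<Sum>i\<in>UNIV. (v1 i - v2 i) * p i)"
    by (simp add: sum_subtractf left_diff_distrib)
  moreover have "\<bar>v1 i - v2 i\<bar> \<le> int K" for i
  proof -
    have "v1 i \<in> {0..int K}" "v2 i \<in> {0..int K}"
      using v(1,2) unfolding V_def by (simp_all add: PiE_iff)
    then show ?thesis by auto
  qed
  moreover have "\<exists>i. v1 i - v2 i \<noteq> 0" using v(3) by auto
  ultimately show ?thesis by (intro exI[of _ "\<lambda>i. v1 i - v2 i"]) auto
qed

lemma exists_small_dual_approximation:
  fixes w :: "real ^ 'n"
  assumes T: "1 \<le> T"
  defines "r \<equiv> real T powr (1 / real CARD('n))"
  shows "\<exists>k\<in>int_vecs. k \<noteq> 0 \<and> supnorm k \<le> r \<and>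
           real T * znorm1 (k \<bullet> w) \<le> real CARD('n) * r * znorm (real T *\<^sub>R w)"
proof -
  define K where "K = nat \<lfloor>r\<rfloor>"
  have r1: "1 \<le> r" unfolding r_def using T by (intro ge_one_powr_ge_zero) auto
  have Kr: "real K \<le> r" "r < real K + 1" unfolding K_def using r1 by linarith+
  have "r ^ CARD('n) = r powr real CARD('n)" using r1 by (simp add: powr_realpow)
  also have "\<dots> = real T" unfolding r_def powr_powr by simp
  finally have "real T = r ^ CARD('n)" ..
  also have "\<dots> < (real K + 1) ^ CARD('n)" using Kr r1 by (intro power_strict_mono) auto
  finally have TK: "T < (K + 1) ^ CARD('n)" by (metis of_nat_1 of_nat_add of_nat_less_iff of_nat_power)
  then obtain v where v: "\<exists>i. v i \<noteq> 0" "\<And>i. \<bar>v i\<bar> \<le> int K"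
    and "int T dvd (\<Sum>i\<in>UNIV. v i * round (real T * w $ i))"
    using exists_small_int_combination_dvd[OF T TK, where p = "\<lambda>i. round (real T * w $ i)"]
    by blast
  then obtain m where m: "(\<Sum>i\<in>UNIV. v i * round (real T * w $ i)) = int T * m"
    by (elim dvdE)
  define k :: "real ^ 'n" where "k = (\<chi> i. of_int (v i))"
  define p where "p = round_vec (real T *\<^sub>R w)"
  have k: "k \<in> int_vecs" unfolding k_def int_vecs_def by auto
  obtain i where "v i \<noteq> 0" using v(1) by blast
  then have k0: "k \<noteq> 0" unfolding k_def by (metis vec_lambda_beta zero_index of_int_eq_0_iff)
  have "supnorm k \<le> real K"
  proof (rule supnorm_leI)
    fix i
    show "\<bar>k $ i\<bar> \<le> real K"
      using v(2)[of i] unfolding k_def by (metis of_int_abs of_int_le_iff of_int_of_nat_eq vec_lambda_beta)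
  qed
  then have kr: "supnorm k \<le> r" using Kr by linarith
  have "k \<bullet> p = (\<Sum>i\<in>UNIV. real_of_int (v i * round (real T * w $ i)))"
    unfolding k_def p_def round_vec_def inner_vec_def by simp
  also have "\<dots> = real T * of_int m" by (simp only: of_int_sum[symmetric] m) simp
  finally have kp: "k \<bullet> p = real T * of_int m" .
  have "real T * znorm1 (k \<bullet> w) \<le> real T * \<bar>k \<bullet> w - of_int m\<bar>"
    by (intro mult_left_mono znorm1_le) auto
  also have "\<dots> = \<bar>real T * (k \<bullet> w - of_int m)\<bar>" by (simp add: abs_mult)
  also have "\<dots> = \<bar>k \<bullet> (real T *\<^sub>R w - p)\<bar>"
    using kp by (simp add: inner_diff_right right_diff_distrib)
  also have "\<dots> \<le> real CARD('n) * supnorm k * znorm (real T *\<^sub>R w)"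
    using abs_inner_le_supnorm unfolding p_def znorm_eq_supnorm .
  also have "\<dots> \<le> real CARD('n) * r * znorm (real T *\<^sub>R w)"
    using kr by (intro mult_right_mono mult_left_mono znorm_nonneg) auto
  finally have "real T * znorm1 (k \<bullet> w) \<le> real CARD('n) * r * znorm (real T *\<^sub>R w)" .
  with k k0 kr show ?thesis by (intro bexI[where x = k]) simp_all
qed

section \<open>Dirichlet's theorem near an integer relation\<close>

lemma abs_floor_combination_le:
  fixes w k :: "real ^ 'n"
  assumes K: "supnorm k \<le> real K" and small: "real T * \<bar>k \<bullet> w - of_int m\<bar> \<le> 1"
  shows "\<bar>real T * of_int m - (\<Sum>i\<in>UNIV. k $ i * of_int \<lfloor>real T * w $ i\<rfloor>)\<bar>
           \<le> real CARD('n) * real K + 1"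
proof -
  define f :: "real ^ 'n" where "f = (\<chi> i. frac (real T * w $ i))"
  have "supnorm f \<le> 1"
    by (rule supnorm_leI) (simp add: f_def frac_ge_0 frac_lt_1 less_imp_le)
  then have "real CARD('n) * supnorm k * supnorm f \<le> real CARD('n) * real K * 1"
    using K supnorm_nonneg[of f] by (intro mult_mono mult_left_mono) auto
  then have "\<bar>k \<bullet> f\<bar> \<le> real CARD('n) * real K" using abs_inner_le_supnorm[of k f] by linarith
  moreover have "real T * of_int m - (\<Sum>i\<in>UNIV. k $ i * of_int \<lfloor>real T * w $ i\<rfloor>)
      = k \<bullet> f - real T * (k \<bullet> w - of_int m)"
    unfolding f_def inner_vec_def frac_def
    by (simp add: algebra_simps sum_subtractf sum_distrib_left)
  moreover have "\<bar>real T * (k \<bullet> w - of_int m)\<bar> \<le> 1" using small by (simp add: abs_mult)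
  ultimately show ?thesis
    using abs_triangle_ineq4[of "k \<bullet> f" "real T * (k \<bullet> w - of_int m)"] by linarith
qed

lemma exists_lattice_point_on_relation:
  fixes w k :: "real ^ 'n"
  assumes k: "k \<in> int_vecs" and K: "supnorm k = real K" and M: "M \<ge> 1"
    and N: "N = M ^ (CARD('n) - 1) * (2 * CARD('n) * K + 3)"
    and small: "real N * \<bar>k \<bullet> w - of_int m\<bar> \<le> 1"
  shows "\<exists>T p. 1 \<le> T \<and> T \<le> N \<and> p \<in> int_vecs \<and> k \<bullet> p = real T * of_int m \<and>
           (\<forall>j. j \<noteq> j0 \<longrightarrow> \<bar>(real T *\<^sub>R w - p) $ j\<bar> < 1 / real M)"
proof -
  define kz where "kz i = \<lfloor>k $ i\<rfloor>" for i
  have kz: "k $ i = of_int (kz i)" for i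
    using k unfolding int_vecs_def kz_def by (auto elim: Ints_cases)
  define g where "g T = int T * m - (\<Sum>i\<in>UNIV. kz i * \<lfloor>real T * w $ i\<rfloor>)" for T :: nat
  define S where "S = {-(int (CARD('n) * K) + 1) .. int (CARD('n) * K) + 1}"
  have gS: "\<forall>T\<le>N. g T \<in> S"
  proof (intro allI impI)
    fix T assume "T \<le> N"
    have "real T * \<bar>k \<bullet> w - of_int m\<bar> \<le> real N * \<bar>k \<bullet> w - of_int m\<bar>"
      using \<open>T \<le> N\<close> by (intro mult_right_mono) auto
    then have "real T * \<bar>k \<bullet> w - of_int m\<bar> \<le> 1" using small by linarith
    then have "\<bar>real_of_int (g T)\<bar> \<le> real CARD('n) * real K + 1"
      using abs_floor_combination_le[of k K] K unfolding g_def by (simp add: kz)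
    then have "real_of_int \<bar>g T\<bar> \<le> real_of_int (int (CARD('n) * K) + 1)" by simp
    then have "\<bar>g T\<bar> \<le> int (CARD('n) * K) + 1" by (simp only: of_int_le_iff)
    then show "g T \<in> S" unfolding S_def by auto
  qed
  have fin: "finite S" unfolding S_def by simp
  have "finite (UNIV - {j0})" by simp
  have "card S = 2 * CARD('n) * K + 3"
    unfolding S_def by simp (simp add: nat_add_distrib nat_mult_distrib)
  moreover have "card (UNIV - {j0}) = CARD('n) - 1" by (simp add: card_Diff_subset)
  ultimately have card: "card S * M ^ card (UNIV - {j0}) \<le> N"
    unfolding N by (simp add: mult.commute)
  obtain U1 U2 where U: "U1 < U2" "U2 \<le> N" "g U1 = g U2"
    "\<forall>j\<in>UNIV - {j0}. \<bar>frac (real U2 * w $ j) - frac (real U1 * w $ j)\<bar> < 1 / real M"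
    using pigeonhole_frac_boxes[where \<alpha> = "\<lambda>j. w $ j", OF \<open>finite (UNIV - {j0})\<close> M fin gS card]
    by blast
  define p :: "real ^ 'n" where "p = (\<chi> i. of_int (\<lfloor>real U2 * w $ i\<rfloor> - \<lfloor>real U1 * w $ i\<rfloor>))"
  have "p \<in> int_vecs" unfolding p_def int_vecs_def by auto
  moreover have "k \<bullet> p = real (U2 - U1) * of_int m"
  proof -
    have "(\<Sum>i\<in>UNIV. kz i * (\<lfloor>real U2 * w $ i\<rfloor> - \<lfloor>real U1 * w $ i\<rfloor>))
        = (\<Sum>i\<in>UNIV. kz i * \<lfloor>real U2 * w $ i\<rfloor>) - (\<Sum>i\<in>UNIV. kz i * \<lfloor>real U1 * w $ i\<rfloor>)"
      by (simp add: right_diff_distrib sum_subtractf)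
    also have "\<dots> = int (U2 - U1) * m"
      using U(1,3) unfolding g_def by (simp add: of_nat_diff left_diff_distrib)
    finally have sum: "(\<Sum>i\<in>UNIV. kz i * (\<lfloor>real U2 * w $ i\<rfloor> - \<lfloor>real U1 * w $ i\<rfloor>)) = int (U2 - U1) * m" .
    have "k \<bullet> p = (\<Sum>i\<in>UNIV. real_of_int (kz i * (\<lfloor>real U2 * w $ i\<rfloor> - \<lfloor>real U1 * w $ i\<rfloor>)))"
      unfolding p_def inner_vec_def kz by simp
    also have "\<dots> = real (U2 - U1) * of_int m" by (simp only: of_int_sum[symmetric] sum) simp
    finally show ?thesis .
  qed
  moreover have "(real (U2 - U1) *\<^sub>R w - p) $ j = frac (real U2 * w $ j) - frac (real U1 * w $ j)" for j
    using floor_diff_plus_frac_diff[of U1 U2 "w $ j"] U(1) unfolding p_def by simp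
  ultimately show ?thesis using U by (intro exI[of _ "U2 - U1"] exI[of _ p]) auto
qed

lemma abs_max_component_le:
  fixes k e :: "real ^ 'n"
  assumes j0: "supnorm k = \<bar>k $ j0\<bar>" and k: "0 < supnorm k" and \<epsilon>: "0 \<le> \<epsilon>"
    and small: "\<And>j. j \<noteq> j0 \<Longrightarrow> \<bar>e $ j\<bar> \<le> \<epsilon>"
  shows "\<bar>e $ j0\<bar> \<le> \<bar>k \<bullet> e\<bar> / supnorm k + real CARD('n) * \<epsilon>"
proof -
  define J where "J = UNIV - {j0}"
  have "\<bar>\<Sum>j\<in>J. k $ j * e $ j\<bar> \<le> (\<Sum>j\<in>J. \<bar>k $ j\<bar> * \<bar>e $ j\<bar>)"
    using sum_abs[of "\<lambda>j. k $ j * e $ j" J] by (simp add: abs_mult)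
  also have "\<dots> \<le> (\<Sum>j\<in>J. supnorm k * \<epsilon>)"
    using small abs_le_supnorm supnorm_nonneg unfolding J_def by (intro sum_mono mult_mono) auto
  also have "\<dots> = real (card J) * (supnorm k * \<epsilon>)" by simp
  also have "\<dots> \<le> real CARD('n) * (supnorm k * \<epsilon>)"
    using card_mono[of UNIV J] k \<epsilon> by (intro mult_right_mono) auto
  finally have rest: "\<bar>\<Sum>j\<in>J. k $ j * e $ j\<bar> \<le> real CARD('n) * (supnorm k * \<epsilon>)" .
  have "k $ j0 * e $ j0 + (\<Sum>j\<in>J. k $ j * e $ j) = k \<bullet> e"
    unfolding inner_vec_def inner_real_def J_def by (rule sum.remove[symmetric]) simp_all
  then have "\<bar>k $ j0 * e $ j0\<bar> \<le> \<bar>k \<bullet> e\<bar> + \<bar>\<Sum>j\<in>J. k $ j * e $ j\<bar>"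
    by (metis abs_triangle_ineq4 add_diff_cancel_right')
  then have "supnorm k * \<bar>e $ j0\<bar> \<le> \<bar>k \<bullet> e\<bar> + real CARD('n) * (supnorm k * \<epsilon>)"
    using rest j0 by (simp add: abs_mult)
  then show ?thesis using k by (simp add: field_simps)
qed

lemma dirichlet_near_relation:
  fixes w k :: "real ^ 'n"
  assumes k: "k \<in> int_vecs" "k \<noteq> 0" and K: "supnorm k = real K" and M: "M \<ge> 1"
    and N: "N = M ^ (CARD('n) - 1) * (2 * CARD('n) * K + 3)"
    and small: "real N * \<bar>k \<bullet> w - of_int m\<bar> \<le> 1"
  shows "\<exists>T. 1 \<le> T \<and> T \<le> N \<and>
           znorm (real T *\<^sub>R w) \<le> real N * \<bar>k \<bullet> w - of_int m\<bar> / real K + real CARD('n) / real M"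
proof -
  define bound where "bound = real N * \<bar>k \<bullet> w - of_int m\<bar> / real K + real CARD('n) / real M"
  obtain j0 where j0: "supnorm k = \<bar>k $ j0\<bar>" using supnorm_attained by blast
  have K1: "1 \<le> real K" using int_vec_supnorm_ge_1[OF k] K by simp
  obtain T p where T: "1 \<le> T" "T \<le> N" "p \<in> int_vecs" "k \<bullet> p = real T * of_int m"
    and close: "\<And>j. j \<noteq> j0 \<Longrightarrow> \<bar>(real T *\<^sub>R w - p) $ j\<bar> < 1 / real M"
    using exists_lattice_point_on_relation[OF k(1) K M N small, of j0] by blast
  define e where "e = real T *\<^sub>R w - p"
  have "k \<bullet> e = real T * (k \<bullet> w - of_int m)"
    using T(4) unfolding e_def by (simp add: inner_diff_right algebra_simps)
  then have "\<bar>k \<bullet> e\<bar> \<le> real N * \<bar>k \<bullet> w - of_int m\<bar>"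
    using T(2) by (simp add: abs_mult mult_right_mono)
  then have "\<bar>k \<bullet> e\<bar> / real K \<le> real N * \<bar>k \<bullet> w - of_int m\<bar> / real K"
    by (rule divide_right_mono) simp
  moreover have "\<bar>e $ j0\<bar> \<le> \<bar>k \<bullet> e\<bar> / supnorm k + real CARD('n) * (1 / real M)"
    using close K1 K unfolding e_def by (intro abs_max_component_le[OF j0]) (auto intro: less_imp_le)
  ultimately have "\<bar>e $ j0\<bar> \<le> bound" unfolding bound_def K by simp
  moreover have "\<bar>e $ j\<bar> \<le> bound" if "j \<noteq> j0" for j
  proof -
    have "1 / real M \<le> real CARD('n) / real M" using M by (simp add: divide_right_mono)
    moreover have "0 \<le> real N * \<bar>k \<bullet> w - of_int m\<bar> / real K" by simp
    ultimately show ?thesis using close[OF that] unfolding bound_def e_def by linarith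
  qed
  ultimately have e: "\<bar>e $ j\<bar> \<le> bound" for j by (cases "j = j0") auto
  have "znorm (real T *\<^sub>R w) \<le> bound"
  proof (rule znorm_leI)
    fix j
    obtain z where "p $ j = of_int z" using T(3) unfolding int_vecs_def by (auto elim: Ints_cases)
    then show "\<exists>z. \<bar>(real T *\<^sub>R w) $ j - of_int z\<bar> \<le> bound" using e[of j] unfolding e_def by auto
  qed
  then show ?thesis using T unfolding bound_def by blast
qed

section \<open>The periods\<close>

lemma periods_ge_1: "periods w i = Some t \<Longrightarrow> 1 \<le> t"
proof (induction i arbitrary: t)
  case (Suc i)
  then obtain t0 where t0: "periods w i = Some t0" by (cases "periods w i") auto
  let ?P = "\<lambda>T::nat. 1 \<le> T \<and> znorm (real T *\<^sub>R w) < znorm (real t0 *\<^sub>R w)"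
  have "\<exists>T. ?P T" and "t = (LEAST T. ?P T)" using Suc.prems t0 by (auto split: if_splits)
  then show ?case using LeastI_ex[of ?P] by simp
qed simp

lemma periods_Suc_le:
  assumes "periods w i = Some t" "1 \<le> T" "znorm (real T *\<^sub>R w) < znorm (real t *\<^sub>R w)"
  shows "\<exists>t'. periods w (Suc i) = Some t' \<and> t' \<le> T"
  using assms by (auto intro: Least_le)

definition no_integer_relation :: "real ^ 'n \<Rightarrow> bool" where
  "no_integer_relation w \<longleftrightarrow> (\<forall>k\<in>int_vecs. k \<noteq> 0 \<longrightarrow> k \<bullet> w \<notin> \<int>)"

lemma znorm_pos_if_no_integer_relation:
  fixes w :: "real ^ 'n"
  assumes "no_integer_relation w" and T: "1 \<le> T"
  shows "0 < znorm (real T *\<^sub>R w)"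
proof (rule ccontr)
  assume "\<not> ?thesis"
  then have "znorm (real T *\<^sub>R w) = 0" using znorm_nonneg[of "real T *\<^sub>R w"] by linarith
  obtain i0 :: 'n where True by blast
  define k :: "real ^ 'n" where "k = (\<chi> i. if i = i0 then real T else 0)"
  have "\<bar>(real T *\<^sub>R w - round_vec (real T *\<^sub>R w)) $ i0\<bar> = 0"
    using abs_le_supnorm[of "real T *\<^sub>R w - round_vec (real T *\<^sub>R w)" i0] \<open>znorm _ = 0\<close>
    unfolding znorm_eq_supnorm by simp
  then have "real T * w $ i0 = of_int (round (real T * w $ i0))" unfolding round_vec_def by simp
  then have "real T * w $ i0 \<in> \<int>" by (metis Ints_of_int)
  moreover have "k \<bullet> w = (\<Sum>i\<in>UNIV. if i = i0 then real T * w $ i else 0)"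
    unfolding k_def inner_vec_def by (intro sum.cong) auto
  then have "k \<bullet> w = real T * w $ i0" by simp
  ultimately have "k \<bullet> w \<in> \<int>" by simp
  moreover have "k \<in> int_vecs" "k \<noteq> 0"
    using T unfolding k_def int_vecs_def by (auto simp: vec_eq_iff)
  ultimately show False using assms(1) unfolding no_integer_relation_def by blast
qed

lemma periods_defined_if_no_integer_relation:
  fixes w :: "real ^ 'n"
  assumes "no_integer_relation w"
  shows "\<exists>t. periods w i = Some t"
proof (induction i)
  case (Suc i)
  then obtain t where t: "periods w i = Some t" by blast
  then have "0 < znorm (real t *\<^sub>R w)"
    using znorm_pos_if_no_integer_relation[OF assms] periods_ge_1 by blast
  then obtain T where "1 \<le> T" "znorm (real T *\<^sub>R w) < znorm (real t *\<^sub>R w)"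
    using znorm_arbitrarily_small by blast
  then show ?case using periods_Suc_le[OF t] by blast
qed simp

text \<open>Meaningful only when all periods are defined, e.g. without integer relation.\<close>
definition period :: "real ^ 'n \<Rightarrow> nat \<Rightarrow> nat" where
  "period w i = the (periods w i)"

context
  fixes w :: "real ^ 'n"
  assumes no_rel: "no_integer_relation w"
begin

lemma periods_eq_Some_period: "periods w i = Some (period w i)"
  using periods_defined_if_no_integer_relation[OF no_rel, of i] unfolding period_def by auto

lemma period_0: "period w 0 = 1"
  using periods_eq_Some_period[of 0] by simp

lemma period_ge_1: "1 \<le> period w i"
  using periods_ge_1[OF periods_eq_Some_period] .

lemma exists_better_than_period:
  "\<exists>T::nat. 1 \<le> T \<and> znorm (real T *\<^sub>R w) < znorm (real (period w i) *\<^sub>R w)"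
  using znorm_arbitrarily_small znorm_pos_if_no_integer_relation[OF no_rel period_ge_1] by blast

lemma period_Suc:
  "period w (Suc i) = (LEAST T::nat. 1 \<le> T \<and> znorm (real T *\<^sub>R w) < znorm (real (period w i) *\<^sub>R w))"
  using periods_eq_Some_period[of "Suc i"] periods_eq_Some_period[of i] exists_better_than_period[of i]
  by simp

lemma znorm_period_Suc_less: "znorm (real (period w (Suc i)) *\<^sub>R w) < znorm (real (period w i) *\<^sub>R w)"
  using LeastI_ex[OF exists_better_than_period[of i]] unfolding period_Suc[of i] by blast

lemma znorm_period_le:
  assumes "1 \<le> T" "T < period w (Suc i)"
  shows "znorm (real (period w i) *\<^sub>R w) \<le> znorm (real T *\<^sub>R w)"
  using not_less_Least[of T "\<lambda>T. 1 \<le> T \<and> znorm (real T *\<^sub>R w) < znorm (real (period w i) *\<^sub>R w)"]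
    assms unfolding period_Suc[of i] by auto

lemma period_less_Suc: "period w i < period w (Suc i)"
proof (rule ccontr)
  assume "\<not> ?thesis"
  moreover have "period w (Suc i) \<noteq> period w i" using znorm_period_Suc_less[of i] by auto
  ultimately have less: "period w (Suc i) < period w i" by simp
  show False
  proof (cases i)
    case 0
    then show False using less period_0 period_ge_1[of "Suc i"] by simp
  next
    case (Suc j)
    then have "znorm (real (period w j) *\<^sub>R w) \<le> znorm (real (period w (Suc i)) *\<^sub>R w)"
      using less period_ge_1 znorm_period_le by simp
    then show False using znorm_period_Suc_less[of j] znorm_period_Suc_less[of i] Suc by simp
  qed
qed

lemma index_le_period: "i \<le> period w i"
proof (induction i)
  case (Suc i)
  then show ?case using period_less_Suc[of i] by simp
qed simp

lemma period_bracket: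
  assumes "1 \<le> X"
  shows "\<exists>i. real (period w i) \<le> X \<and> X < real (period w (Suc i))"
proof -
  define A where "A = {i. real (period w i) \<le> X}"
  have "A \<subseteq> {..nat \<lceil>X\<rceil>}"
  proof
    fix i assume "i \<in> A"
    have "real i \<le> real (period w i)" using index_le_period[of i] by simp
    then have "real i \<le> X" using \<open>i \<in> A\<close> unfolding A_def by simp
    then show "i \<in> {..nat \<lceil>X\<rceil>}" by (simp add: le_nat_iff le_ceiling_iff)
  qed
  then have "finite A" by (rule finite_subset) simp
  moreover have "0 \<in> A" unfolding A_def using assms period_0 by simp
  ultimately have "Max A \<in> A" by (intro Max_in) auto
  moreover have "Suc (Max A) \<notin> A"
  proof
    assume "Suc (Max A) \<in> A"
    then have "Suc (Max A) \<le> Max A" using Max_ge[OF \<open>finite A\<close>] by blast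
    then show False by simp
  qed
  ultimately show ?thesis unfolding A_def by auto
qed

end

section \<open>The inclusions\<close>

lemma Omega_up_subset_Omega_low:
  assumes "0 \<le> \<tau>"
  shows "(Omega_up \<tau> :: (real ^ 'n) set) \<subseteq> Omega_low (real CARD('n) * \<tau>)"
proof
  fix w :: "real ^ 'n"
  assume "w \<in> Omega_up \<tau>"
  then obtain C where C: "C > 0" and H: "\<And>k. k \<in> int_vecs \<Longrightarrow> k \<noteq> 0 \<Longrightarrow>
      C * supnorm k powr (-(1 + \<tau>) * real CARD('n)) \<le> znorm1 (k \<bullet> w)"
    unfolding Omega_up_def by blast
  define n where "n = real CARD('n)"
  have n: "0 < n" unfolding n_def by simp
  have "C / n * real T powr (-(1 + n * \<tau>) / n) \<le> znorm (real T *\<^sub>R w)" if T: "1 \<le> T" for T :: nat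
  proof -
    define r where "r = real T powr (1 / n)"
    have r: "1 \<le> r" unfolding r_def using T n by (intro ge_one_powr_ge_zero) auto
    obtain k where k: "k \<in> int_vecs" "k \<noteq> 0" "supnorm k \<le> r"
      and approx: "real T * znorm1 (k \<bullet> w) \<le> n * r * znorm (real T *\<^sub>R w)"
      using exists_small_dual_approximation[OF T, of w] unfolding r_def n_def by blast
    have "C * real T powr (-(1 + \<tau>)) = C * r powr (-(1 + \<tau>) * n)"
      unfolding r_def powr_powr using n by simp
    also have "\<dots> \<le> C * supnorm k powr (-(1 + \<tau>) * n)"
      using k(3) int_vec_supnorm_ge_1[OF k(1,2)] C n assms
      by (intro mult_left_mono powr_mono2') (auto intro: mult_nonpos_nonneg)
    also have "\<dots> \<le> znorm1 (k \<bullet> w)" using H[OF k(1,2)] unfolding n_def .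
    finally have "real T * (C * real T powr (-(1 + \<tau>))) \<le> n * r * znorm (real T *\<^sub>R w)"
      using approx T by (meson mult_left_mono of_nat_0_le_iff order_trans)
    moreover have "real T * real T powr (-(1 + \<tau>)) = r * real T powr (-(1 + n * \<tau>) / n)"
      unfolding r_def using T n by (simp add: powr_add[symmetric] powr_mult_base field_simps)
    ultimately have "r * (C * real T powr (-(1 + n * \<tau>) / n)) \<le> r * (n * znorm (real T *\<^sub>R w))"
      by (simp add: algebra_simps)
    then show ?thesis using r n by (simp add: field_simps)
  qed
  then show "w \<in> Omega_low (real CARD('n) * \<tau>)"
    unfolding Omega_low_def n_def using C by (intro CollectI exI[of _ "C / n"]) (auto simp: n_def)
qed

lemma Omega_low_subset_Omega_per: "(Omega_low \<sigma> :: (real ^ 'n) set) \<subseteq> Omega_per \<sigma>"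
proof
  fix w :: "real ^ 'n"
  assume "w \<in> Omega_low \<sigma>"
  then obtain C where C: "C > 0" and H: "\<And>T::nat. 1 \<le> T \<Longrightarrow>
      C * real T powr (-(1 + \<sigma>) / real CARD('n)) \<le> znorm (real T *\<^sub>R w)"
    unfolding Omega_low_def by blast
  define a where "a = (1 + \<sigma>) / real CARD('n)"
  have "real t' \<le> (2 / C) ^ CARD('n) * real t powr (1 + \<sigma>)"
    if t: "periods w i = Some t" and t': "periods w (Suc i) = Some t'" for i t t'
  proof -
    define \<epsilon> where "\<epsilon> = znorm (real t *\<^sub>R w)"
    have ta: "0 < real t powr a" using periods_ge_1[OF t] by simp
    have "-(1 + \<sigma>) / real CARD('n) = - a" unfolding a_def by (simp add: field_simps)
    then have "real t powr (-(1 + \<sigma>) / real CARD('n)) = inverse (real t powr a)"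
      by (simp only: powr_minus)
    then have C\<epsilon>: "C / real t powr a \<le> \<epsilon>"
      using H[OF periods_ge_1[OF t]] unfolding \<epsilon>_def by (simp add: divide_inverse)
    have "0 < C / real t powr a" using C ta by simp
    then have "0 < \<epsilon>" using C\<epsilon> by linarith
    moreover have "C \<le> \<epsilon> * real t powr a" using C\<epsilon> ta by (simp add: pos_divide_le_eq)
    ultimately have \<epsilon>: "0 < \<epsilon>" "C \<le> \<epsilon> * real t powr a" by blast+
    obtain M where M: "1 \<le> M" "real M \<le> 2 / \<epsilon>" "1 / real M \<le> \<epsilon>"
      using exists_nat_inverse_bounds[of "\<epsilon> / 2"] \<epsilon>(1) znorm_le_half[of "real t *\<^sub>R w"]
      unfolding \<epsilon>_def by auto
    obtain T where T: "1 \<le> T" "T \<le> M ^ CARD('n)" "znorm (real T *\<^sub>R w) < \<epsilon>"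
      using dirichlet_approximation[OF M(1), of w] M(3) by fastforce
    then have "t' \<le> M ^ CARD('n)"
      using periods_Suc_le[OF t] t' unfolding \<epsilon>_def by fastforce
    then have "real t' \<le> real M ^ CARD('n)" by (metis of_nat_le_iff of_nat_power)
    also have "\<dots> \<le> (2 * real t powr a / C) ^ CARD('n)"
    proof (rule power_mono)
      have "2 / \<epsilon> \<le> 2 * real t powr a / C" using \<epsilon> C by (simp add: field_simps)
      then show "real M \<le> 2 * real t powr a / C" using M(2) by linarith
    qed simp
    also have "\<dots> = (2 / C) ^ CARD('n) * (real t powr a) ^ CARD('n)"
      by (simp add: power_mult_distrib power_divide)
    also have "(real t powr a) ^ CARD('n) = real t powr (1 + \<sigma>)"
      by (subst powr_realpow[OF ta, symmetric]) (simp add: powr_powr a_def)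
    finally show ?thesis .
  qed
  then show "w \<in> Omega_per \<sigma>"
    unfolding Omega_per_def using C by (intro CollectI exI[of _ "(2 / C) ^ CARD('n)"]) auto
qed

lemma exists_nat_powr_gt:
  fixes R \<gamma> :: real
  assumes "0 < \<gamma>"
  shows "\<exists>M::nat. 1 \<le> M \<and> R < real M powr \<gamma>"
proof -
  define M where "M = nat \<lceil>\<bar>R\<bar> powr (1 / \<gamma>)\<rceil> + 1"
  have "\<bar>R\<bar> powr (1 / \<gamma>) < real M"
    unfolding M_def using real_nat_ceiling_ge[of "\<bar>R\<bar> powr (1 / \<gamma>)"] by linarith
  then have "(\<bar>R\<bar> powr (1 / \<gamma>)) powr \<gamma> < real M powr \<gamma>"
    using assms by (intro powr_less_mono2) auto
  then have "\<bar>R\<bar> < real M powr \<gamma>" using assms by (simp add: powr_powr)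
  then show ?thesis unfolding M_def by (intro exI[of _ M]) (auto simp: M_def)
qed

lemma Omega_low_no_integer_relation:
  fixes w :: "real ^ 'n"
  assumes \<sigma>: "0 \<le> \<sigma>" and exponent: "(real CARD('n) - 1) * (1 + \<sigma>) < real CARD('n)"
    and w: "w \<in> Omega_low \<sigma>"
  shows "no_integer_relation w"
  unfolding no_integer_relation_def
proof (intro ballI impI notI)
  fix k :: "real ^ 'n"
  assume k: "k \<in> int_vecs" "k \<noteq> 0" and "k \<bullet> w \<in> \<int>"
  then obtain m where m: "k \<bullet> w = of_int m" by (auto elim: Ints_cases)
  obtain K where K: "supnorm k = real K" using int_vec_supnorm_nat[OF k(1)] by blast
  obtain C where C: "C > 0" and H: "\<And>T::nat. 1 \<le> T \<Longrightarrow>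
      C * real T powr (-(1 + \<sigma>) / real CARD('n)) \<le> znorm (real T *\<^sub>R w)"
    using w unfolding Omega_low_def by blast
  define n where "n = real CARD('n)"
  define a where "a = (1 + \<sigma>) / n"
  define \<gamma> where "\<gamma> = 1 - (n - 1) * a"
  define Q where "Q = real (2 * CARD('n) * K + 3)"
  have n: "1 \<le> n" unfolding n_def by (simp add: Suc_leI)
  have a: "0 < a" unfolding a_def using \<sigma> n by simp
  have \<gamma>: "0 < \<gamma>" using exponent n unfolding \<gamma>_def a_def n_def by (simp add: field_simps)
  have Q: "0 < Q" unfolding Q_def of_nat_0_less_iff by simp
  have bound: "C * real M powr \<gamma> \<le> n * Q powr a" if M: "1 \<le> M" for M :: nat
  proof -
    define N where "N = M ^ (CARD('n) - 1) * (2 * CARD('n) * K + 3)"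
    obtain T where T: "1 \<le> T" "T \<le> N" "znorm (real T *\<^sub>R w) \<le> n / real M"
      using dirichlet_near_relation[OF k K M N_def, of w m] m unfolding n_def by auto
    have "real M ^ (CARD('n) - 1) = real M powr real (CARD('n) - 1)"
      by (rule powr_realpow[symmetric]) (use M in simp)
    also have "real (CARD('n) - 1) = n - 1" unfolding n_def by (simp add: of_nat_diff Suc_leI)
    finally have RN: "real N = real M powr (n - 1) * Q"
      unfolding N_def Q_def by (simp only: of_nat_mult of_nat_power)
    have "C * real N powr (- a) \<le> C * real T powr (- a)"
      using T(1,2) C a by (intro mult_left_mono powr_mono2') auto
    also have "\<dots> \<le> n / real M"
      using H[OF T(1)] T(3) unfolding a_def n_def by (simp add: minus_divide_left)
    finally have "C \<le> n / real M * real N powr a"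
      using RN Q M by (simp add: powr_minus field_simps)
    also have "real N powr a = real M powr ((n - 1) * a) * Q powr a"
      unfolding RN using M Q by (simp add: powr_mult powr_powr)
    finally have "C * (real M powr \<gamma> * real M powr ((n - 1) * a))
        \<le> n * Q powr a * real M powr ((n - 1) * a)"
      using M by (simp add: field_simps powr_add[symmetric] \<gamma>_def)
    then show ?thesis using M by simp
  qed
  obtain M where "1 \<le> M" "n * Q powr a / C < real M powr \<gamma>"
    using exists_nat_powr_gt[OF \<gamma>] by blast
  then show False using bound[of M] C by (simp add: field_simps)
qed

lemma Omega_low_subset_Omega_tilde:
  assumes "0 \<le> \<sigma>" and "(real CARD('n) - 1) * (1 + \<sigma>) < real CARD('n)"
  shows "(Omega_low \<sigma> :: (real ^ 'n) set) \<subseteq> Omega_tilde \<sigma>"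
  using Omega_low_subset_Omega_per Omega_low_no_integer_relation[OF assms]
  unfolding Omega_tilde_def no_integer_relation_def by blast

lemma lower_bound_from_large_root:
  fixes \<delta> K n \<tau> :: real
  assumes n: "1 \<le> n" and \<delta>: "0 < \<delta>" and K: "1 \<le> K" and \<tau>: "0 \<le> \<tau>"
    and large: "1 / 2 < (2 * n * K + 3) * \<delta> powr (1 / n)"
  shows "(10 * n) powr (- n) * K powr (- (1 + \<tau>) * n) \<le> \<delta>"
proof -
  define x where "x = \<delta> powr (1 / n)"
  have x: "0 < x" unfolding x_def using \<delta> by simp
  have "1 * 1 \<le> n * K" using n K by (intro mult_mono) auto
  then have "2 * n * K + 3 \<le> 5 * n * K" by (simp add: mult.commute)
  then have "(2 * n * K + 3) * x \<le> 5 * n * K * x" using x by (intro mult_right_mono) auto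
  then have "1 / 2 < 5 * n * K * x" using large unfolding x_def by linarith
  moreover have "x * (10 * n * K) = 2 * (5 * n * K * x)" by simp
  ultimately have "1 < x * (10 * n * K)" by linarith
  then have "1 / (10 * n * K) < x" using n K by (simp add: pos_divide_less_eq)
  then have "(1 / (10 * n * K)) powr n < x powr n" using n K by (intro powr_less_mono2) auto
  also have "x powr n = \<delta>" unfolding x_def using n \<delta> by (simp add: powr_powr)
  also have "(1 / (10 * n * K)) powr n = inverse ((10 * n) powr n * K powr n)"
    unfolding powr_divide using n K by (simp add: powr_mult divide_inverse)
  also have "\<dots> = (10 * n) powr (- n) * K powr (- n)"
    by (simp only: inverse_mult_distrib powr_minus)
  finally have "(10 * n) powr (- n) * K powr (- n) < \<delta>" .
  moreover have "K powr (- (1 + \<tau>) * n) \<le> K powr (- n)"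
    using K n \<tau> by (intro powr_mono) (auto simp: algebra_simps)
  then have "(10 * n) powr (- n) * K powr (- (1 + \<tau>) * n) \<le> (10 * n) powr (- n) * K powr (- n)"
    by (intro mult_left_mono) auto
  ultimately show ?thesis by linarith
qed

text \<open>Here p is a period with 1/(2\<delta>) < C p^a bounding the next one; eliminating p between
  the two hypotheses leaves \<delta>^(1/D) > 1/(B K^a).\<close>
lemma lower_bound_from_period_bracket:
  fixes \<delta> C K p n a D \<tau> :: real
  assumes n: "1 \<le> n" and \<delta>: "0 < \<delta>" and K: "1 \<le> K" and p: "1 \<le> p" and C: "0 < C"
    and a: "0 \<le> a" and D: "0 < D" and aD: "a * D = n * (1 + \<tau>)"
    and exponent: "1 + (1 / n - 1) * a = 1 / D"
    and next_period: "1 / (2 * \<delta>) < C * p powr a"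
    and approx: "p * \<delta> \<le> 7 * n^2 * K * \<delta> powr (1 / n)"
  shows "(2 * C * (7 * n^2) powr a) powr (- D) * K powr (- (1 + \<tau>) * n) \<le> \<delta>"
proof -
  define B where "B = 2 * C * (7 * n^2) powr a"
  have B: "0 < B" unfolding B_def using C n by simp
  have "p \<le> 7 * n^2 * K * (\<delta> powr (1 / n) / \<delta>)" using approx \<delta> by (simp add: field_simps)
  also have "\<delta> powr (1 / n) / \<delta> = \<delta> powr (1 / n - 1)" using \<delta> by (simp add: powr_diff)
  finally have "p powr a \<le> (7 * n^2 * K * \<delta> powr (1 / n - 1)) powr a"
    using p a by (intro powr_mono2) auto
  also have "\<dots> = (7 * n^2) powr a * K powr a * \<delta> powr ((1 / n - 1) * a)"
    using \<delta> K n by (simp add: powr_mult powr_powr)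
  finally have pa: "p powr a \<le> (7 * n^2) powr a * K powr a * \<delta> powr ((1 / n - 1) * a)" .
  have "1 < 2 * \<delta> * (C * p powr a)" using next_period \<delta> by (simp add: field_simps)
  also have "\<dots> \<le> 2 * \<delta> * (C * ((7 * n^2) powr a * K powr a * \<delta> powr ((1 / n - 1) * a)))"
    using pa \<delta> C by (intro mult_left_mono) auto
  also have "\<dots> = B * K powr a * (\<delta> powr 1 * \<delta> powr ((1 / n - 1) * a))"
    unfolding B_def using \<delta> by (simp add: algebra_simps)
  also have "\<delta> powr 1 * \<delta> powr ((1 / n - 1) * a) = \<delta> powr (1 / D)"
    by (simp only: powr_add[symmetric] exponent)
  finally have "1 / (B * K powr a) < \<delta> powr (1 / D)" using B K by (simp add: field_simps)
  then have "(1 / (B * K powr a)) powr D < (\<delta> powr (1 / D)) powr D"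
    using B K D by (intro powr_less_mono2) auto
  also have "\<dots> = \<delta>" using D \<delta> by (simp add: powr_powr)
  also have "(1 / (B * K powr a)) powr D = inverse ((B * K powr a) powr D)"
    unfolding powr_divide by (simp add: divide_inverse)
  also have "(B * K powr a) powr D = B powr D * K powr (n * (1 + \<tau>))"
    using B K by (simp add: powr_mult powr_powr aD)
  also have "inverse \<dots> = inverse (B powr D) * inverse (K powr (n * (1 + \<tau>)))"
    by (rule inverse_mult_distrib)
  also have "\<dots> = B powr (- D) * K powr (- (n * (1 + \<tau>)))" by (simp only: powr_minus)
  also have "- (n * (1 + \<tau>)) = - (1 + \<tau>) * n" by (simp add: algebra_simps)
  finally show ?thesis unfolding B_def by simp
qed

lemma good_approximation_near_relation:
  fixes w k :: "real ^ 'n"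
  defines "n \<equiv> real CARD('n)"
  assumes k: "k \<in> int_vecs" "k \<noteq> 0" and K: "supnorm k = real K"
    and \<delta>: "\<delta> = \<bar>k \<bullet> w - of_int m\<bar>" "0 < \<delta>"
    and small: "(2 * n * real K + 3) * \<delta> powr (1 / n) \<le> 1 / 2"
  shows "\<exists>T. 1 \<le> T \<and> 2 * real T * \<delta> \<le> 1 \<and> znorm (real T *\<^sub>R w) \<le> 7 * n * \<delta> powr (1 / n)"
proof -
  define x where "x = \<delta> powr (1 / n)"
  define Q where "Q = 2 * n * real K + 3"
  have n: "1 \<le> n" unfolding n_def by (simp add: Suc_leI)
  have K1: "1 \<le> real K" using int_vec_supnorm_ge_1[OF k] K by simp
  have x: "0 < x" unfolding x_def using \<delta> by simp
  have "1 * 1 \<le> n * real K" using n K1 by (intro mult_mono) auto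
  then have Q: "5 \<le> Q" "Q \<le> 5 * n * real K" unfolding Q_def by simp_all
  have Qx: "Q * x \<le> 1 / 2" using small unfolding Q_def x_def .
  moreover have "5 * x \<le> Q * x" using Q x by (intro mult_right_mono) auto
  ultimately have "x \<le> 1 / 2" by linarith
  then obtain M where M: "1 \<le> M" "real M \<le> 1 / x" "1 / real M \<le> 2 * x"
    using exists_nat_inverse_bounds x by blast
  define N where "N = M ^ (CARD('n) - 1) * (2 * CARD('n) * K + 3)"
  have "x ^ CARD('n) = x powr n" unfolding n_def by (rule powr_realpow[symmetric]) (use x in simp)
  also have "\<dots> = \<delta>" unfolding x_def using n \<delta> by (simp add: powr_powr)
  finally have xn: "x ^ CARD('n) = \<delta>" .
  have "(real M * x) ^ (CARD('n) - 1) \<le> 1"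
    using M x by (intro power_le_one) (auto simp: field_simps)
  then have "real M ^ (CARD('n) - 1) * x ^ (CARD('n) - 1) * (Q * x) \<le> Q * x"
    using Q x by (simp add: power_mult_distrib mult_le_cancel_right1)
  moreover have "x ^ CARD('n) = x ^ (CARD('n) - 1) * x" by (simp add: power_eq_if)
  ultimately have Nd: "real N * \<delta> \<le> Q * x"
    unfolding N_def Q_def n_def xn[symmetric] by (simp add: algebra_simps)
  obtain T where T: "1 \<le> T" "T \<le> N" "znorm (real T *\<^sub>R w) \<le> real N * \<delta> / real K + n / real M"
    using dirichlet_near_relation[OF k K M(1) N_def, of w m] Nd Qx \<delta> unfolding n_def by auto
  have "real N * \<delta> / real K \<le> Q * x / real K" using Nd K1 by (simp add: divide_right_mono)
  also have "\<dots> \<le> 5 * n * x" using Q(2) K1 x by (simp add: field_simps)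
  finally have "real N * \<delta> / real K \<le> 5 * n * x" .
  moreover have "n * (1 / real M) \<le> n * (2 * x)" using M(3) n by (intro mult_left_mono) auto
  then have "n / real M \<le> 2 * n * x" by simp
  moreover have "real T * \<delta> \<le> real N * \<delta>" using T(2) \<delta> by (simp add: mult_right_mono)
  then have "2 * real T * \<delta> \<le> 1" using Nd Qx by linarith
  ultimately show ?thesis using T unfolding x_def by (intro exI[of _ T]) auto
qed

lemma exists_period_near_relation:
  fixes w k :: "real ^ 'n"
  defines "n \<equiv> real CARD('n)"
  assumes no_rel: "no_integer_relation w"
    and k: "k \<in> int_vecs" "k \<noteq> 0" and K: "supnorm k = real K"
    and \<delta>: "\<delta> = \<bar>k \<bullet> w - of_int m\<bar>" "0 < \<delta>" "\<delta> \<le> 1 / 2"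
    and small: "(2 * n * real K + 3) * \<delta> powr (1 / n) \<le> 1 / 2"
  shows "\<exists>i. 1 / (2 * \<delta>) < real (period w (Suc i)) \<and>
             real (period w i) * \<delta> \<le> 7 * n^2 * real K * \<delta> powr (1 / n)"
proof -
  have n: "1 \<le> n" unfolding n_def by (simp add: Suc_leI)
  obtain T where T: "1 \<le> T" "2 * real T * \<delta> \<le> 1"
    "znorm (real T *\<^sub>R w) \<le> 7 * n * \<delta> powr (1 / n)"
    using good_approximation_near_relation[OF k K \<delta>(1,2)] small unfolding n_def by auto
  have "1 \<le> 1 / (2 * \<delta>)" using \<delta>(2,3) by (simp add: field_simps)
  then obtain i where i: "real (period w i) \<le> 1 / (2 * \<delta>)" "1 / (2 * \<delta>) < real (period w (Suc i))"
    using period_bracket[OF no_rel] by blast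
  have "real T \<le> 1 / (2 * \<delta>)" using T(2) \<delta>(2) by (simp add: field_simps)
  then have "T < period w (Suc i)" using i(2) by linarith
  then have "znorm (real (period w i) *\<^sub>R w) \<le> 7 * n * \<delta> powr (1 / n)"
    using znorm_period_le[OF no_rel T(1)] T(3) by fastforce
  then have "n * real K * znorm (real (period w i) *\<^sub>R w) \<le> n * real K * (7 * n * \<delta> powr (1 / n))"
    by (rule mult_left_mono) (use n in simp)
  moreover have "real (period w i) * \<delta> \<le> 1 / 2" using i(1) \<delta>(2) by (simp add: field_simps)
  then have "real (period w i) * \<delta> \<le> n * real K * znorm (real (period w i) *\<^sub>R w)"
    using near_integer_inner_le_znorm[OF k(1)] K unfolding \<delta>(1) n_def by simp
  ultimately have "real (period w i) * \<delta> \<le> 7 * n^2 * real K * \<delta> powr (1 / n)"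
    by (simp add: power2_eq_square algebra_simps)
  then show ?thesis using i(2) by blast
qed

lemma znorm1_inner_lower_bound:
  fixes w k :: "real ^ 'n"
  defines "n \<equiv> real CARD('n)"
  assumes no_rel: "no_integer_relation w"
    and growth: "\<And>i. real (period w (Suc i)) \<le> C * real (period w i) powr a"
    and C: "0 < C" and a: "0 \<le> a" and D: "0 < D" and aD: "a * D = n * (1 + \<tau>)"
    and exponent: "1 + (1 / n - 1) * a = 1 / D" and \<tau>: "0 \<le> \<tau>"
    and k: "k \<in> int_vecs" "k \<noteq> 0"
  shows "min ((10 * n) powr (- n)) ((2 * C * (7 * n^2) powr a) powr (- D))
           * supnorm k powr (- (1 + \<tau>) * n) \<le> znorm1 (k \<bullet> w)"
proof -
  define m where "m = round (k \<bullet> w)"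
  define \<delta> where "\<delta> = \<bar>k \<bullet> w - of_int m\<bar>"
  have n: "1 \<le> n" unfolding n_def by (simp add: Suc_leI)
  have "0 < \<delta>"
  proof (rule ccontr)
    assume "\<not> 0 < \<delta>"
    then have "k \<bullet> w \<in> \<int>" unfolding \<delta>_def by simp
    then show False using no_rel k unfolding no_integer_relation_def by blast
  qed
  have "\<delta> \<le> 1 / 2"
    unfolding \<delta>_def m_def using of_int_round_abs_le[of "k \<bullet> w"] by (simp add: abs_minus_commute)
  obtain K where K: "supnorm k = real K" using int_vec_supnorm_nat[OF k(1)] by blast
  have K1: "1 \<le> real K" using int_vec_supnorm_ge_1[OF k] K by simp
  have "(10 * n) powr (- n) * real K powr (- (1 + \<tau>) * n) \<le> \<delta> \<or>
        (2 * C * (7 * n^2) powr a) powr (- D) * real K powr (- (1 + \<tau>) * n) \<le> \<delta>"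
  proof (cases "1 / 2 < (2 * n * real K + 3) * \<delta> powr (1 / n)")
    case True
    then show ?thesis using lower_bound_from_large_root[OF n \<open>0 < \<delta>\<close> K1 \<tau>] by blast
  next
    case False
    then obtain i where "1 / (2 * \<delta>) < real (period w (Suc i))"
      and approx: "real (period w i) * \<delta> \<le> 7 * n^2 * real K * \<delta> powr (1 / n)"
      using exists_period_near_relation[OF no_rel k K \<delta>_def \<open>0 < \<delta>\<close> \<open>\<delta> \<le> 1 / 2\<close>]
      unfolding n_def by auto
    then have "1 / (2 * \<delta>) < C * real (period w i) powr a" using growth[of i] by linarith
    moreover have "1 \<le> real (period w i)" using period_ge_1[OF no_rel] by simp
    ultimately show ?thesis
      using lower_bound_from_period_bracket[OF n \<open>0 < \<delta>\<close> K1 _ C a D aD exponent] approx by blast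
  qed
  moreover have "znorm1 (k \<bullet> w) = \<delta>" unfolding \<delta>_def m_def by (rule znorm1_eq)
  moreover have "min c1 c2 * real K powr e \<le> c1 * real K powr e"
    "min c1 c2 * real K powr e \<le> c2 * real K powr e" for c1 c2 e :: real
    by (simp_all add: mult_right_mono)
  ultimately show ?thesis unfolding K by (meson order_trans)
qed

lemma tau_prime_exponents:
  fixes n \<tau> :: real
  assumes n: "1 \<le> n" and \<tau>: "0 \<le> \<tau>"
  defines "D \<equiv> (n - 1) * \<tau> + n"
  shows "0 < D" and "(1 + \<tau> / D) * D = n * (1 + \<tau>)"
    and "1 + (1 / n - 1) * (1 + \<tau> / D) = 1 / D" and "(n - 1) * (1 + \<tau> / D) < n"
proof -
  have "0 \<le> (n - 1) * \<tau>" using n \<tau> by simp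
  then show D: "0 < D" unfolding D_def using n by linarith
  have "(1 + \<tau> / D) * D = D + \<tau>" using D by (simp add: field_simps)
  then show aD: "(1 + \<tau> / D) * D = n * (1 + \<tau>)" unfolding D_def by (simp add: algebra_simps)
  have "(1 / n - 1) * (1 + \<tau> / D) * D = (1 / n - 1) * (n * (1 + \<tau>))" by (simp only: mult.assoc aD)
  also have "\<dots> = 1 - D" using n unfolding D_def by (simp add: field_simps)
  finally have "(1 / n - 1) * (1 + \<tau> / D) * D = 1 - D" .
  then have "(1 / n - 1) * (1 + \<tau> / D) = (1 - D) / D" using D by (simp add: eq_divide_eq)
  then show "1 + (1 / n - 1) * (1 + \<tau> / D) = 1 / D"
    by (simp only:) (use D in \<open>simp add: diff_divide_distrib\<close>)
  have "(n - 1) * (1 + \<tau> / D) * D = (n - 1) * (n * (1 + \<tau>))" by (simp only: mult.assoc aD)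
  also have "\<dots> < n * D" using n \<tau> unfolding D_def by (simp add: algebra_simps)
  finally have "(n - 1) * (1 + \<tau> / D) * D < n * D" .
  then show "(n - 1) * (1 + \<tau> / D) < n" using D by simp
qed

lemma Omega_tilde_subset_Omega_up:
  assumes \<tau>: "0 \<le> \<tau>"
  shows "(Omega_tilde (\<tau> / ((real CARD('n) - 1) * \<tau> + real CARD('n))) :: (real ^ 'n) set)
           \<subseteq> Omega_up \<tau>"
proof
  fix w :: "real ^ 'n"
  define n where "n = real CARD('n)"
  define D where "D = (n - 1) * \<tau> + n"
  assume "w \<in> Omega_tilde (\<tau> / ((real CARD('n) - 1) * \<tau> + real CARD('n)))"
  then obtain C where C: "0 < C" and no_rel: "no_integer_relation w"
    and growth: "\<And>i t t'. periods w i = Some t \<Longrightarrow> periods w (Suc i) = Some t' \<Longrightarrow>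
      real t' \<le> C * real t powr (1 + \<tau> / D)"
    unfolding Omega_tilde_def Omega_per_def no_integer_relation_def D_def n_def by blast
  have n: "1 \<le> n" unfolding n_def by (simp add: Suc_leI)
  note exps = tau_prime_exponents[OF n \<tau>, folded D_def]
  define c where "c = min ((10 * n) powr (- n)) ((2 * C * (7 * n^2) powr (1 + \<tau> / D)) powr (- D))"
  have "c * supnorm k powr (- (1 + \<tau>) * n) \<le> znorm1 (k \<bullet> w)" if "k \<in> int_vecs" "k \<noteq> 0" for k
    unfolding c_def n_def
  proof (rule znorm1_inner_lower_bound[OF no_rel _ C _ exps(1)])
    show "real (period w (Suc i)) \<le> C * real (period w i) powr (1 + \<tau> / D)" for i
      using growth periods_eq_Some_period[OF no_rel] by blast
  qed (use exps \<tau> that in \<open>auto simp: n_def\<close>)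
  moreover have "0 < c" unfolding c_def using n C by simp
  ultimately show "w \<in> Omega_up \<tau>" unfolding Omega_up_def n_def by blast
qed

theorem mainTheorem1:
  fixes \<tau> :: real
  assumes "\<tau> \<ge> 0"
  defines "\<tau>' \<equiv> \<tau> / ((real CARD('n) - 1) * \<tau> + real CARD('n))"
  shows "(Omega_low \<tau>' :: (real ^ 'n) set) \<subseteq> Omega_tilde \<tau>'
       \<and> (Omega_tilde \<tau>' :: (real ^ 'n) set) \<subseteq> Omega_up \<tau>
       \<and> (Omega_up \<tau> :: (real ^ 'n) set) \<subseteq> Omega_low (real CARD('n) * \<tau>)"
proof (intro conjI)
  have n: "1 \<le> real CARD('n)" by (simp add: Suc_leI)
  note exps = tau_prime_exponents[OF n assms(1), folded \<tau>'_def]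
  show "(Omega_low \<tau>' :: (real ^ 'n) set) \<subseteq> Omega_tilde \<tau>'"
    using exps(1,4) assms(1) unfolding \<tau>'_def by (intro Omega_low_subset_Omega_tilde) simp_all
  show "(Omega_tilde \<tau>' :: (real ^ 'n) set) \<subseteq> Omega_up \<tau>"
    unfolding \<tau>'_def using assms(1) by (rule Omega_tilde_subset_Omega_up)
  show "(Omega_up \<tau> :: (real ^ 'n) set) \<subseteq> Omega_low (real CARD('n) * \<tau>)"
    using assms(1) by (rule Omega_up_subset_Omega_low)
qed

end
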